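(* Let $F\colon\Omega\to\Omega$ be a piecewise translation in $\mathbb{R}^d$ with any number $m$ of branches, and let $\mathcal{F}\colon\Omega\to\Sigma$ be its fate map. If $\omega\in\Sigma$ is not eventually periodic (i.e. there are no $n\ge0$, $p\ge1$ with $\sigma^{n+p}\omega=\sigma^n\omega$), then $\mathrm{Leb}(\mathcal{F}^{-1}(\omega))=0$.
   Context: A region is a compact subset of $\mathbb{R}^d$ which equals the closure of its interior. A piecewise translation with $m$ branches: $\Omega\subset\mathbb{R}^d$ is a region, $\Omega=P_0\cup\dots\cup P_{m-1}$ with each $P_i$ a region, distinct $P_i$ intersecting only in boundaries, $\mathrm{Leb}(\partial P_i)=0$; vectors $v_i$ satisfy $x+v_i\in\Omega$ for $x\in P_i$; $i(x)$ is an index with $x\in P_{i(x)}$ (boundary ambiguity resolved by a fixed measurable rule), and $F(x)=x+v_{i(x)}$. $\Sigma=\{0,\dots,m-1\}^{\mathbb{N}_0}$ with left shift $\sigma$. The fate map is $\mathcal{F}(x)=(i(x),i(F(x)),i(F^2(x)),\dots)$; it satisfies $\mathcal{F}\circ F=\sigma\circ\mathcal{F}$. *)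

theory Defs
  imports "HOL-Analysis.Analysis"
begin

definition region :: "'a::euclidean_space set \<Rightarrow> bool" where
  "region S \<longleftrightarrow> compact S \<and> closure (interior S) = S"

definition piecewise_translation ::
  "'a::euclidean_space set \<Rightarrow> nat \<Rightarrow> (nat \<Rightarrow> 'a set) \<Rightarrow> (nat \<Rightarrow> 'a) \<Rightarrow> ('a \<Rightarrow> nat) \<Rightarrow> bool" where
  "piecewise_translation \<Omega> m P v idx \<longleftrightarrow>
     region \<Omega> \<and>
     \<Omega> = (\<Union>i<m. P i) \<and>
     (\<forall>i<m. region (P i)) \<and>
     (\<forall>i<m. \<forall>j<m. i \<noteq> j \<longrightarrow> P i \<inter> P j \<subseteq> frontier (P i) \<inter> frontier (P j)) \<and>
     (\<forall>i<m. frontier (P i) \<in> null_sets lebesgue) \<and>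
     (\<forall>i<m. \<forall>x\<in>P i. x + v i \<in> \<Omega>) \<and>
     (\<forall>x\<in>\<Omega>. idx x < m \<and> x \<in> P (idx x)) \<and>
     idx \<in> measurable (lebesgue_on \<Omega>) (count_space UNIV)"

definition pt_map :: "(nat \<Rightarrow> 'a::euclidean_space) \<Rightarrow> ('a \<Rightarrow> nat) \<Rightarrow> 'a \<Rightarrow> 'a" where
  "pt_map v idx x = x + v (idx x)"

definition fate :: "(nat \<Rightarrow> 'a::euclidean_space) \<Rightarrow> ('a \<Rightarrow> nat) \<Rightarrow> 'a \<Rightarrow> nat \<Rightarrow> nat" where
  "fate v idx x n = idx ((pt_map v idx ^^ n) x)"

definition eventually_periodic :: "(nat \<Rightarrow> 'b) \<Rightarrow> bool" where
  "eventually_periodic w \<longleftrightarrow> (\<exists>n p. p \<ge> 1 \<and> (\<lambda>k. w (k + (n + p))) = (\<lambda>k. w (k + n)))"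

end

theory Submission
  imports Defs
begin

text \<open>Along the fate cylinder of \<open>\<omega>\<close> the iterate \<open>F\<^sup>n\<close> is the single translation by
  \<open>s n = v (\<omega> 0) + \<dots> + v (\<omega> (n - 1))\<close>, so the translates of the cylinder by the \<open>s n\<close> are
  copies of it of the same measure inside \<open>\<Omega>\<close>. The \<open>n\<close>-th copy consists of points of fate
  \<open>\<sigma>\<^sup>n \<omega>\<close>; when \<open>\<omega>\<close> is not eventually periodic these fates are pairwise distinct, so the
  copies are pairwise disjoint. Infinitely many disjoint sets of equal measure fit into the
  set \<open>\<Omega>\<close> of finite measure only if that measure is zero.\<close>

lemma disjoint_family_equal_measure_eq_0:
  fixes T :: "nat \<Rightarrow> 'a set"
  assumes "S \<in> fmeasurable M" "range T \<subseteq> sets M" "\<And>n. T n \<subseteq> S" "disjoint_family T"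
    and "\<And>n. measure M (T n) = c"
  shows "c = 0"
proof -
  have "emeasure M (\<Union>n. T n) \<le> emeasure M S"
    using assms(1-3) by (intro emeasure_mono) (auto simp: fmeasurable_def)
  with fmeasurableD2[OF assms(1)] have "emeasure M (\<Union>n. T n) \<noteq> \<infinity>"
    unfolding infinity_ennreal_def by (rule neq_top_trans)
  with assms(2,4) have "(\<lambda>n. measure M (T n)) sums measure M (\<Union>n. T n)"
    by (rule measure_UNION)
  then have "summable (\<lambda>_::nat. c)"
    using assms(5) by (simp add: sums_summable)
  then show ?thesis
    by (simp add: summable_const_iff)
qed

lemma null_sets_if_disjoint_translates_in_lmeasurable:
  fixes A :: "'a::euclidean_space set" and c :: "nat \<Rightarrow> 'a"
  assumes "A \<in> lmeasurable" "S \<in> lmeasurable"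
    and "\<And>n. (+) (c n) ` A \<subseteq> S" "disjoint_family (\<lambda>n. (+) (c n) ` A)"
  shows "A \<in> null_sets lebesgue"
proof -
  have "(+) (c n) ` A \<in> sets lebesgue" for n
    using fmeasurableD[OF assms(1)] by (rule lebesgue_sets_translation)
  then have translates_sets: "range (\<lambda>n. (+) (c n) ` A) \<subseteq> sets lebesgue"
    by blast
  have translates_measure: "measure lebesgue ((+) (c n) ` A) = measure lebesgue A" for n
    by (rule measure_translation)
  have "measure lebesgue A = 0"
    by (rule disjoint_family_equal_measure_eq_0[OF assms(2) translates_sets assms(3,4) translates_measure])
  then have "emeasure lebesgue A = 0"
    by (simp add: emeasure_eq_measure2[OF assms(1)])
  from this fmeasurableD[OF assms(1)] show ?thesis
    by (rule null_setsI)
qed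

lemma funpow_pt_map_along_itinerary:
  assumes "\<And>k. k < n \<Longrightarrow> idx ((pt_map v idx ^^ k) x) = w k"
  shows "(pt_map v idx ^^ n) x = x + (\<Sum>j<n. v (w j))"
  using assms
proof (induction n)
  case (Suc n)
  have "(pt_map v idx ^^ n) x = x + (\<Sum>j<n. v (w j))"
    using Suc by simp
  moreover have "idx ((pt_map v idx ^^ n) x) = w n"
    using Suc.prems[of n] by simp
  moreover have "(pt_map v idx ^^ Suc n) x =
      (pt_map v idx ^^ n) x + v (idx ((pt_map v idx ^^ n) x))"
    by (simp add: pt_map_def)
  ultimately show ?case
    by (simp add: algebra_simps)
qed simp

lemma funpow_pt_map_eq_translation:
  assumes "fate v idx x = w"
  shows "(pt_map v idx ^^ n) x = x + (\<Sum>j<n. v (w j))"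
  by (rule funpow_pt_map_along_itinerary) (simp add: fate_def[symmetric] assms)

lemma fate_eq_iff:
  "fate v idx x = w \<longleftrightarrow> (\<forall>n. idx (x + (\<Sum>j<n. v (w j))) = w n)"
proof
  assume fate: "fate v idx x = w"
  show "\<forall>n. idx (x + (\<Sum>j<n. v (w j))) = w n"
  proof
    fix n
    have "idx (x + (\<Sum>j<n. v (w j))) = fate v idx x n"
      by (simp add: fate_def funpow_pt_map_eq_translation[OF fate])
    with fate show "idx (x + (\<Sum>j<n. v (w j))) = w n"
      by simp
  qed
next
  assume offsets: "\<forall>n. idx (x + (\<Sum>j<n. v (w j))) = w n"
  have "idx ((pt_map v idx ^^ n) x) = w n" for n
  proof (induction n rule: less_induct)
    case (less n)
    then show ?case
      using offsets funpow_pt_map_along_itinerary[of n idx v x w] by simp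
  qed
  then show "fate v idx x = w"
    by (simp add: fate_def fun_eq_iff)
qed

lemma fate_funpow_pt_map: "fate v idx ((pt_map v idx ^^ n) x) = (\<lambda>j. fate v idx x (j + n))"
  by (simp add: fate_def funpow_add fun_eq_iff)

lemma shifts_neq_if_not_eventually_periodic:
  assumes "\<not> eventually_periodic w" "n \<noteq> k"
  shows "(\<lambda>j. w (j + n)) \<noteq> (\<lambda>j. w (j + k))"
proof
  assume eq: "(\<lambda>j. w (j + n)) = (\<lambda>j. w (j + k))"
  have "(\<lambda>j. w (j + (min n k + (max n k - min n k)))) = (\<lambda>j. w (j + min n k))"
    using eq by (cases "n \<le> k") (auto simp: min_def max_def)
  moreover have "max n k - min n k \<ge> 1"
    using assms(2) by simp
  ultimately have "eventually_periodic w"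
    unfolding eventually_periodic_def by blast
  with assms(1) show False ..
qed

lemma domain_lmeasurable:
  assumes "piecewise_translation \<Omega> m P v idx"
  shows "\<Omega> \<in> lmeasurable"
proof -
  have "region \<Omega>"
    using assms unfolding piecewise_translation_def by blast
  then show ?thesis
    by (simp add: region_def lmeasurable_compact)
qed

lemma funpow_pt_map_in_domain:
  assumes "piecewise_translation \<Omega> m P v idx" "x \<in> \<Omega>"
  shows "(pt_map v idx ^^ n) x \<in> \<Omega>"
proof -
  have "pt_map v idx y \<in> \<Omega>" if "y \<in> \<Omega>" for y
    using assms(1) that by (auto simp: piecewise_translation_def pt_map_def)
  then show ?thesis
    using assms(2) by (induction n) auto
qed

lemma fate_cylinder_eq_Inter_translates:
  assumes "piecewise_translation \<Omega> m P v idx"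
  shows "{x \<in> \<Omega>. fate v idx x = w} =
    (\<Inter>n. (+) (- (\<Sum>j<n. v (w j))) ` {y \<in> \<Omega>. idx y = w n})"
proof (intro equalityI subsetI INT_I)
  fix x n assume "x \<in> {x \<in> \<Omega>. fate v idx x = w}"
  then have "x \<in> \<Omega>" and fate: "fate v idx x = w" by auto
  have "x + (\<Sum>j<n. v (w j)) \<in> \<Omega>"
    using funpow_pt_map_in_domain[OF assms \<open>x \<in> \<Omega>\<close>, of n]
    by (simp add: funpow_pt_map_eq_translation[OF fate])
  moreover have "idx (x + (\<Sum>j<n. v (w j))) = w n"
    using fate by (simp add: fate_eq_iff)
  ultimately show "x \<in> (+) (- (\<Sum>j<n. v (w j))) ` {y \<in> \<Omega>. idx y = w n}"
    by (intro rev_image_eqI[where x = "x + (\<Sum>j<n. v (w j))"]) auto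
next
  fix x assume x: "x \<in> (\<Inter>n. (+) (- (\<Sum>j<n. v (w j))) ` {y \<in> \<Omega>. idx y = w n})"
  have "x + (\<Sum>j<n. v (w j)) \<in> {y \<in> \<Omega>. idx y = w n}" for n
  proof -
    from x obtain y where "y \<in> {y \<in> \<Omega>. idx y = w n}" and "x = - (\<Sum>j<n. v (w j)) + y"
      by blast
    then show ?thesis
      by simp
  qed
  from this[of 0] this show "x \<in> {x \<in> \<Omega>. fate v idx x = w}"
    by (simp add: fate_eq_iff)
qed

lemma fate_cylinder_sets_lebesgue:
  assumes "piecewise_translation \<Omega> m P v idx"
  shows "{x \<in> \<Omega>. fate v idx x = w} \<in> sets lebesgue"
proof -
  have "\<Omega> \<in> sets lebesgue"
    using domain_lmeasurable[OF assms] by (rule fmeasurableD)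
  moreover have "idx -` {k} \<inter> space (lebesgue_on \<Omega>) \<in> sets (lebesgue_on \<Omega>)" for k
    using assms by (intro measurable_sets[where A = "count_space UNIV"])
      (auto simp: piecewise_translation_def)
  ultimately have "{y \<in> \<Omega>. idx y = k} \<in> sets lebesgue" for k
    by (auto simp: sets_restrict_space_iff Int_def conj_commute)
  then show ?thesis
    unfolding fate_cylinder_eq_Inter_translates[OF assms]
    by (intro sets.countable_INT' image_subsetI lebesgue_sets_translation) auto
qed

lemma translate_fate_cylinder_subset:
  assumes "piecewise_translation \<Omega> m P v idx"
  shows "(+) (\<Sum>j<n. v (w j)) ` {x \<in> \<Omega>. fate v idx x = w}
    \<subseteq> {y \<in> \<Omega>. fate v idx y = (\<lambda>j. w (j + n))}"
proof
  fix y assume "y \<in> (+) (\<Sum>j<n. v (w j)) ` {x \<in> \<Omega>. fate v idx x = w}"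
  then obtain x where "x \<in> \<Omega>" and fate: "fate v idx x = w" and "y = (\<Sum>j<n. v (w j)) + x"
    by auto
  then have "y = (pt_map v idx ^^ n) x"
    by (simp add: funpow_pt_map_eq_translation add.commute)
  then show "y \<in> {y \<in> \<Omega>. fate v idx y = (\<lambda>j. w (j + n))}"
    using funpow_pt_map_in_domain[OF assms \<open>x \<in> \<Omega>\<close>] by (simp add: fate_funpow_pt_map fate)
qed

lemma disjoint_family_translates_fate_cylinder:
  assumes "piecewise_translation \<Omega> m P v idx" "\<not> eventually_periodic w"
  shows "disjoint_family (\<lambda>n. (+) (\<Sum>j<n. v (w j)) ` {x \<in> \<Omega>. fate v idx x = w})"
  unfolding disjoint_family_on_def
proof (intro ballI impI equals0I)
  fix n k y assume "n \<noteq> k"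
    and "y \<in> (+) (\<Sum>j<n. v (w j)) ` {x \<in> \<Omega>. fate v idx x = w} \<inter>
      (+) (\<Sum>j<k. v (w j)) ` {x \<in> \<Omega>. fate v idx x = w}"
  then have "fate v idx y = (\<lambda>j. w (j + n))" and "fate v idx y = (\<lambda>j. w (j + k))"
    using translate_fate_cylinder_subset[OF assms(1), where w = w and n = n]
      translate_fate_cylinder_subset[OF assms(1), where w = w and n = k]
    by blast+
  with shifts_neq_if_not_eventually_periodic[OF assms(2) \<open>n \<noteq> k\<close>] show False
    by simp
qed

theorem lemma2p7:
  fixes \<Omega> :: "'a::euclidean_space set" and m :: nat and P :: "nat \<Rightarrow> 'a set"
    and v :: "nat \<Rightarrow> 'a" and idx :: "'a \<Rightarrow> nat" and \<omega> :: "nat \<Rightarrow> nat"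
  assumes "piecewise_translation \<Omega> m P v idx"
    and "\<forall>n. \<omega> n < m"
    and "\<not> eventually_periodic \<omega>"
  shows "{x \<in> \<Omega>. fate v idx x = \<omega>} \<in> null_sets lebesgue"
proof (rule null_sets_if_disjoint_translates_in_lmeasurable)
  have "\<Omega> \<in> lmeasurable"
    using assms(1) by (rule domain_lmeasurable)
  then show "{x \<in> \<Omega>. fate v idx x = \<omega>} \<in> lmeasurable"
    by (rule fmeasurableI2) (auto intro: fate_cylinder_sets_lebesgue[OF assms(1)])
  show "\<Omega> \<in> lmeasurable"
    by fact
  show "(+) (\<Sum>j<n. v (\<omega> j)) ` {x \<in> \<Omega>. fate v idx x = \<omega>} \<subseteq> \<Omega>" for n
    using translate_fate_cylinder_subset[OF assms(1)] by blast
  show "disjoint_family (\<lambda>n. (+) (\<Sum>j<n. v (\<omega> j)) ` {x \<in> \<Omega>. fate v idx x = \<omega>})"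
    using assms(1,3) by (rule disjoint_family_translates_fate_cylinder)
qed

end
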